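(* Let $\Gamma$ be a canonical signed unicyclic graph of order $n$ whose unique cycle $C_g^\sigma$ has length $g$. (1) If $\Gamma=C_g^\sigma$ is a cycle, then $\eta(\Gamma)=n-g$ (i.e. $A(\Gamma)$ is nonsingular) if and only if $g$ is odd, or $C_g^\sigma$ is balanced and $g\equiv 2\pmod 4$, or $C_g^\sigma$ is unbalanced and $g\equiv 0\pmod 4$. (2) If $\Gamma$ is not a cycle, let $v_1,\dots,v_k$ ($k\ge1$) be the major vertices in cyclic order along $C_g^\sigma$ and let $l_1,\dots,l_k\ge0$ be the numbers of cycle vertices strictly between consecutive major vertices (indices mod $k$; for $k=1$, $l_1=g-1$). Then $\eta(\Gamma)=n-g$ if and only if $g$ is even and all of $l_1,\dots,l_k$ are odd.
   Context: A signed graph $\Gamma=(G,\sigma)$ is a simple graph $G$ with a sign function $\sigma:E(G)\to\{+,-\}$; its adjacency matrix has $(u,v)$-entry $\sigma(uv)$ if $uv\in E(G)$, $0$ otherwise, and $\eta(\Gamma)$ is the multiplicity of the eigenvalue $0$. A cycle is balanced if the product of its edge signs is $+$, unbalanced otherwise. A signed unicyclic graph is a connected signed graph with exactly one cycle. It is called canonical if, with $C$ its unique cycle, every vertex not on $C$ is adjacent to exactly one vertex of $C$ and the vertices not on $C$ are pairwise nonadjacent. A vertex of $C$ having at least one neighbour outside $C$ is called a major vertex. *)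

theory Defs
  imports "Jordan_Normal_Form.Char_Poly"
begin

definition simple_graph :: "nat \<Rightarrow> (nat \<Rightarrow> nat \<Rightarrow> bool) \<Rightarrow> bool" where
  "simple_graph n E \<longleftrightarrow>
     (\<forall>u v. E u v \<longrightarrow> u < n \<and> v < n \<and> u \<noteq> v \<and> E v u)"

definition signed_graph :: "nat \<Rightarrow> (nat \<Rightarrow> nat \<Rightarrow> bool) \<Rightarrow> (nat \<Rightarrow> nat \<Rightarrow> real) \<Rightarrow> bool" where
  "signed_graph n E sg \<longleftrightarrow> simple_graph n E \<and>
     (\<forall>u v. E u v \<longrightarrow> sg u v \<in> {1, -1} \<and> sg u v = sg v u)"

definition adj_matrix :: "nat \<Rightarrow> (nat \<Rightarrow> nat \<Rightarrow> bool) \<Rightarrow> (nat \<Rightarrow> nat \<Rightarrow> real) \<Rightarrow> real mat" where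
  "adj_matrix n E sg = mat n n (\<lambda>(i, j). if E i j then sg i j else 0)"

definition nullity :: "nat \<Rightarrow> (nat \<Rightarrow> nat \<Rightarrow> bool) \<Rightarrow> (nat \<Rightarrow> nat \<Rightarrow> real) \<Rightarrow> nat" where
  "nullity n E sg = order 0 (char_poly (adj_matrix n E sg))"

definition connected_graph :: "nat \<Rightarrow> (nat \<Rightarrow> nat \<Rightarrow> bool) \<Rightarrow> bool" where
  "connected_graph n E \<longleftrightarrow> (\<forall>u<n. \<forall>v<n. E\<^sup>*\<^sup>* u v)"

definition is_cycle :: "(nat \<Rightarrow> nat \<Rightarrow> bool) \<Rightarrow> nat list \<Rightarrow> bool" where
  "is_cycle E cs \<longleftrightarrow> length cs \<ge> 3 \<and> distinct cs \<and>
     (\<forall>i < length cs. E (cs ! i) (cs ! ((i + 1) mod length cs)))"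

definition cycle_edges :: "nat list \<Rightarrow> nat set set" where
  "cycle_edges cs = {{cs ! i, cs ! ((i + 1) mod length cs)} | i. i < length cs}"

definition unicyclic_with :: "nat \<Rightarrow> (nat \<Rightarrow> nat \<Rightarrow> bool) \<Rightarrow> nat list \<Rightarrow> bool" where
  "unicyclic_with n E cs \<longleftrightarrow> connected_graph n E \<and> is_cycle E cs \<and>
     (\<forall>ds. is_cycle E ds \<longrightarrow> cycle_edges ds = cycle_edges cs)"

definition canonical_with :: "nat \<Rightarrow> (nat \<Rightarrow> nat \<Rightarrow> bool) \<Rightarrow> nat list \<Rightarrow> bool" where
  "canonical_with n E cs \<longleftrightarrow> unicyclic_with n E cs \<and>
     (\<forall>v<n. v \<notin> set cs \<longrightarrow> (\<exists>!c. c \<in> set cs \<and> E v c)) \<and>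
     (\<forall>u<n. \<forall>v<n. u \<notin> set cs \<longrightarrow> v \<notin> set cs \<longrightarrow> \<not> E u v)"

definition balanced_cycle :: "(nat \<Rightarrow> nat \<Rightarrow> real) \<Rightarrow> nat list \<Rightarrow> bool" where
  "balanced_cycle sg cs \<longleftrightarrow>
     (\<Prod>i<length cs. sg (cs ! i) (cs ! ((i + 1) mod length cs))) = 1"

definition major_vertex :: "nat \<Rightarrow> (nat \<Rightarrow> nat \<Rightarrow> bool) \<Rightarrow> nat list \<Rightarrow> nat \<Rightarrow> bool" where
  "major_vertex n E cs v \<longleftrightarrow> v \<in> set cs \<and> (\<exists>w<n. w \<notin> set cs \<and> E v w)"

definition major_positions :: "nat \<Rightarrow> (nat \<Rightarrow> nat \<Rightarrow> bool) \<Rightarrow> nat list \<Rightarrow> nat list" where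
  "major_positions n E cs =
     sorted_list_of_set {i. i < length cs \<and> major_vertex n E cs (cs ! i)}"

text \<open>l_i: number of cycle vertices strictly between the i-th and the (i+1)-th
(indices mod k) major vertex, going along cs. For k = 1 this is g - 1.\<close>
definition gap :: "nat \<Rightarrow> (nat \<Rightarrow> nat \<Rightarrow> bool) \<Rightarrow> nat list \<Rightarrow> nat \<Rightarrow> int" where
  "gap n E cs i = (let ms = major_positions n E cs; k = length ms in
     (int (ms ! ((i + 1) mod k)) - int (ms ! i) - 1) mod int (length cs))"

end

(* The adjacency matrix A is real symmetric, so eta is the dimension of its kernel. A vector x
   lies in the kernel iff it vanishes at every major vertex (the equation of a pendant vertex p with
   neighbour u reads sigma(p,u) x_u = 0) and, for every cycle vertex c_(i+1), the sum
   sigma_i x_(c_i) + sigma_(i+1) x_(c_(i+2)) plus the contribution of the pendants at c_(i+1)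
   vanishes. Away from the pendants this is the two-step recurrence
   x_(c_(i+2)) = - sigma_i sigma_(i+1) x_(c_i).

   On a bare cycle, running the recurrence once (g even) or twice (g odd) around C multiplies
   x_(c_i) by (-1)^(g/2) sigma(C), respectively by -1, which gives part (1).

   Otherwise, pairs of pendants at a common major vertex give n - g - k independent kernel vectors.
   If g is even and all major vertices sit at positions of the same parity (i.e. all l_i are odd),
   each major vertex a contributes one more, obtained by running the recurrence along the odd
   positions after a up to the next major vertex; so eta >= n - g. Conversely, a kernel vector
   vanishing on all pendants but one and at the successor of that pendant's major vertex is zero,
   so eta <= n - g; when the parity condition fails, the condition at the successor is not needed
   and eta < n - g. *)

theory Submission
  imports Defs "Jordan_Normal_Form.Jordan_Normal_Form_Uniqueness"
    "Jordan_Normal_Form.Jordan_Normal_Form_Existence"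
begin

section \<open>Kernels of matrices\<close>

lemma mult_mat_vec_index_sum:
  assumes "A \<in> carrier_mat nr n" "v \<in> carrier_vec n" "i < nr"
  shows "(A *\<^sub>v v) $ i = (\<Sum>j<n. A $$ (i, j) * v $ j)"
  using assms by (simp add: scalar_prod_def atLeast0LessThan)

lemma hermitian_cscalar_prod:
  fixes B :: "complex mat"
  assumes B: "B \<in> carrier_mat n n"
    and herm: "\<And>i j. i < n \<Longrightarrow> j < n \<Longrightarrow> B $$ (j, i) = cnj (B $$ (i, j))"
    and v: "v \<in> carrier_vec n" and w: "w \<in> carrier_vec n"
  shows "(B *\<^sub>v v) \<bullet>c w = v \<bullet>c (B *\<^sub>v w)"
proof -
  have "(B *\<^sub>v v) \<bullet>c w = (\<Sum>i<n. (B *\<^sub>v v) $ i * cnj (w $ i))"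
    using w by (simp add: scalar_prod_def atLeast0LessThan)
  also have "\<dots> = (\<Sum>i<n. \<Sum>j<n. B $$ (i, j) * v $ j * cnj (w $ i))"
    using B v by (simp add: mult_mat_vec_index_sum sum_distrib_right del: index_mult_mat_vec)
  also have "\<dots> = (\<Sum>j<n. \<Sum>i<n. v $ j * (cnj (B $$ (j, i)) * cnj (w $ i)))"
  proof (subst sum.swap, intro sum.cong refl)
    fix i j assume "i \<in> {..<n}" "j \<in> {..<n}"
    then have "cnj (B $$ (j, i)) = B $$ (i, j)" using herm[of j i] by simp
    then show "B $$ (i, j) * v $ j * cnj (w $ i) = v $ j * (cnj (B $$ (j, i)) * cnj (w $ i))"
      by simp
  qed
  also have "\<dots> = (\<Sum>j<n. v $ j * cnj ((B *\<^sub>v w) $ j))"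
    using B w by (simp add: mult_mat_vec_index_sum sum_distrib_left del: index_mult_mat_vec)
  also have "\<dots> = v \<bullet>c (B *\<^sub>v w)"
    using B by (simp add: scalar_prod_def atLeast0LessThan)
  finally show ?thesis .
qed

lemma hermitian_mat_kernel_square:
  fixes B :: "complex mat"
  assumes B: "B \<in> carrier_mat n n"
    and herm: "\<And>i j. i < n \<Longrightarrow> j < n \<Longrightarrow> B $$ (j, i) = cnj (B $$ (i, j))"
  shows "mat_kernel (B * B) = mat_kernel B"
proof
  show "mat_kernel B \<subseteq> mat_kernel (B * B)" by (rule mat_kernel_mult_subset[OF B B])
  show "mat_kernel (B * B) \<subseteq> mat_kernel B"
  proof
    fix v assume "v \<in> mat_kernel (B * B)"
    then have v: "v \<in> carrier_vec n" and BBv: "B *\<^sub>v (B *\<^sub>v v) = 0\<^sub>v n"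
      using B by (auto simp: mat_kernel_def)
    have "(B *\<^sub>v v) \<bullet>c (B *\<^sub>v v) = v \<bullet>c (B *\<^sub>v (B *\<^sub>v v))"
      using B v by (intro hermitian_cscalar_prod herm) auto
    also have "\<dots> = 0" using BBv v by simp
    finally have "B *\<^sub>v v = 0\<^sub>v n"
      using conjugate_square_eq_0_vec[of "B *\<^sub>v v" n] B v by simp
    then show "v \<in> mat_kernel B" using B v by (auto simp: mat_kernel_def)
  qed
qed

lemma sum_list_eq_sum_list_min_1:
  fixes xs :: "nat list"
  assumes "(\<Sum>x\<leftarrow>xs. min 2 x) = (\<Sum>x\<leftarrow>xs. min 1 x)"
  shows "sum_list xs = (\<Sum>x\<leftarrow>xs. min 1 x)"
  using assms
proof (induction xs)
  case (Cons x xs)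
  have "(\<Sum>x\<leftarrow>xs. min 1 x) \<le> (\<Sum>x\<leftarrow>xs. min 2 x)"
    by (induction xs) auto
  with Cons.prems have "min 2 x = min 1 x" and "(\<Sum>x\<leftarrow>xs. min 2 x) = (\<Sum>x\<leftarrow>xs. min 1 x)"
    by auto
  with Cons.IH show ?case by auto
qed simp

text \<open>Once the generalized eigenspaces stop growing at exponent 1, all Jordan blocks of the
  eigenvalue are trivial.\<close>
lemma order_char_poly_eq_dim_eigenspace:
  fixes B :: "complex mat"
  assumes B: "B \<in> carrier_mat n n"
    and stable: "dim_gen_eigenspace B ev 2 = dim_gen_eigenspace B ev 1"
  shows "Polynomial.order ev (char_poly B) = dim_gen_eigenspace B ev 1"
proof -
  obtain as where "char_poly B = (\<Prod>a\<leftarrow>as. [:- a, 1:])"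
    using char_poly_factorized[OF B] by auto
  then obtain n_as where jnf: "jordan_nf B n_as" using jordan_nf_exists[OF B] by blast
  let ?xs = "map fst [(n, e)\<leftarrow>n_as . e = ev]"
  have "Polynomial.order ev (char_poly B) = sum_list ?xs"
    unfolding jordan_nf_order[OF jnf] by (induction n_as) auto
  also have "\<dots> = (\<Sum>x\<leftarrow>?xs. min 1 x)"
    using stable by (intro sum_list_eq_sum_list_min_1) (simp add: dim_gen_eigenspace[OF jnf])
  also have "\<dots> = dim_gen_eigenspace B ev 1" by (simp add: dim_gen_eigenspace[OF jnf])
  finally show ?thesis .
qed

text \<open>The Jordan normal form is only available after complexification.\<close>
lemma order_zero_char_poly_symmetric:
  fixes A :: "real mat"
  assumes A: "A \<in> carrier_mat n n"
    and sym: "\<And>i j. i < n \<Longrightarrow> j < n \<Longrightarrow> A $$ (j, i) = A $$ (i, j)"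
  shows "Polynomial.order 0 (char_poly A) = kernel_dim (map_mat complex_of_real A)"
proof -
  define B where "B = map_mat complex_of_real A"
  have B: "B \<in> carrier_mat n n" using A by (simp add: B_def)
  have herm: "B $$ (j, i) = cnj (B $$ (i, j))" if "i < n" "j < n" for i j
    using A sym[OF that] that by (simp add: B_def)
  have "map_poly_inj_idom_divide_hom (complex_of_real)" ..
  then have complexify: "Polynomial.order 0 (char_poly A) = Polynomial.order 0 (char_poly B)"
    using map_poly_inj_idom_divide_hom.order_hom[of complex_of_real 0 "char_poly A"]
    by (simp add: B_def of_real_hom.char_poly_hom[OF A])
  have char0: "char_matrix B 0 = B" using B by (auto simp: char_matrix_def)
  have "dim_gen_eigenspace B 0 2 = dim_gen_eigenspace B 0 1"
    using B hermitian_mat_kernel_square[OF B herm]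
    by (simp add: dim_gen_eigenspace_def kernel_dim_def numeral_2_eq_2 char0)
  then have "Polynomial.order 0 (char_poly B) = dim_gen_eigenspace B 0 1"
    by (rule order_char_poly_eq_dim_eigenspace[OF B])
  also have "\<dots> = kernel_dim B"
    using B by (simp add: dim_gen_eigenspace_def char0)
  finally show ?thesis by (simp add: complexify B_def)
qed

lemma kernel_dim_ge_card:
  fixes M :: "'a::field mat"
  assumes M: "M \<in> carrier_mat nr n" and I: "finite I"
    and ker: "\<And>i. i \<in> I \<Longrightarrow> v i \<in> mat_kernel M"
    and pivot: "\<And>i. i \<in> I \<Longrightarrow> p i < n"
    and diag: "\<And>i. i \<in> I \<Longrightarrow> v i $ p i \<noteq> 0"
    and off: "\<And>i j. i \<in> I \<Longrightarrow> j \<in> I \<Longrightarrow> i \<noteq> j \<Longrightarrow> v j $ p i = 0"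
  shows "card I \<le> kernel_dim M"
proof -
  interpret K: kernel nr n M by unfold_locales (rule M)
  have inj: "inj_on v I" using diag off by (metis inj_onI)
  let ?S = "v ` I"
  have SK: "?S \<subseteq> mat_kernel M" using ker by auto
  then have SC: "?S \<subseteq> carrier_vec n" using mat_kernel_carrier[OF M] by auto
  have "K.NC.lin_indpt ?S"
  proof (rule K.NC.finite_lin_indpt2[OF finite_imageI[OF I] SC])
    fix a assume lc: "K.NC.lincomb a ?S = 0\<^sub>v n"
    show "\<forall>w\<in>?S. a w = 0"
    proof
      fix w assume "w \<in> ?S"
      then obtain i where i: "i \<in> I" and w: "w = v i" by auto
      have "0 = K.NC.lincomb a ?S $ p i" using lc pivot[OF i] by simp
      also have "\<dots> = (\<Sum>j\<in>I. a (v j) * v j $ p i)"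
        using K.NC.lincomb_index[OF pivot[OF i] SC] sum.reindex[OF inj] by simp
      also have "\<dots> = a (v i) * v i $ p i + (\<Sum>j\<in>I - {i}. a (v j) * v j $ p i)"
        by (rule sum.remove[OF I i])
      also have "(\<Sum>j\<in>I - {i}. a (v j) * v j $ p i) = 0"
        using off[OF i] by (intro sum.neutral) auto
      finally show "a w = 0" using diag[OF i] w by simp
    qed
  qed
  then have "K.lin_indpt ?S" using K.lindep_same[OF SK] by simp
  moreover obtain B where "finite B" "K.basis B" using kernel_basis_exists[OF M] by auto
  then have "K.Ker.fin_dim" unfolding K.Ker.fin_dim_def K.Ker.basis_def by auto
  ultimately have "card ?S \<le> K.dim" using K.Ker.li_le_dim(2) SK by simp
  then show ?thesis using card_image[OF inj] by simp
qed

lemma mat_kernel_eq_if_restrict_eq: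
  fixes M :: "'a::field mat"
  assumes M: "M \<in> carrier_mat nr n" and h: "\<And>i. i < m \<Longrightarrow> h i < n"
    and vanish: "\<And>x. x \<in> mat_kernel M \<Longrightarrow> vec m (\<lambda>i. x $ h i) = 0\<^sub>v m \<Longrightarrow> x = 0\<^sub>v n"
    and x: "x \<in> mat_kernel M" and y: "y \<in> mat_kernel M"
    and eq: "vec m (\<lambda>i. x $ h i) = vec m (\<lambda>i. y $ h i)"
  shows "x = y"
proof -
  have xc: "x \<in> carrier_vec n" and yc: "y \<in> carrier_vec n"
    using x y mat_kernel_carrier[OF M] by auto
  have "M *\<^sub>v (x - y) = M *\<^sub>v x - M *\<^sub>v y"
    using M xc yc by (simp add: mult_minus_distrib_mat_vec)
  then have "x - y \<in> mat_kernel M"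
    using M xc yc mat_kernelD[OF M x] mat_kernelD[OF M y] by (intro mat_kernelI[OF M]) auto
  moreover have "vec m (\<lambda>i. (x - y) $ h i) = 0\<^sub>v m"
  proof (rule eq_vecI)
    fix i assume "i < dim_vec (0\<^sub>v m :: 'a vec)"
    then show "vec m (\<lambda>i. (x - y) $ h i) $ i = 0\<^sub>v m $ i"
      using arg_cong[OF eq, of "\<lambda>v. v $ i"] h yc by simp
  qed simp
  ultimately have "x - y = 0\<^sub>v n" by (rule vanish)
  show ?thesis
  proof (rule eq_vecI)
    fix i assume "i < dim_vec y"
    then have "(x - y) $ i = 0" using \<open>x - y = 0\<^sub>v n\<close> yc by simp
    then show "x $ i = y $ i" using \<open>i < dim_vec y\<close> xc yc by simp
  qed (use xc yc in simp)
qed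

text \<open>Restricting to the coordinates h 0, ..., h (m - 1) is injective on the kernel, so it maps
  a basis of the kernel to a linearly independent family in m-space.\<close>
lemma kernel_dim_le_restrict:
  fixes M :: "'a::field mat"
  assumes M: "M \<in> carrier_mat nr n" and h: "\<And>i. i < m \<Longrightarrow> h i < n"
    and vanish: "\<And>x. x \<in> mat_kernel M \<Longrightarrow> vec m (\<lambda>i. x $ h i) = 0\<^sub>v m \<Longrightarrow> x = 0\<^sub>v n"
  shows "kernel_dim M \<le> m"
proof -
  interpret K: kernel nr n M by unfold_locales (rule M)
  interpret Vm: vec_space "TYPE('a)" m .
  define restrict where "restrict x = vec m (\<lambda>i. x $ h i)" for x :: "'a vec"
  obtain B where finB: "finite B" and bas: "K.basis B" using kernel_basis_exists[OF M] by auto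
  have BK: "B \<subseteq> mat_kernel M" using bas unfolding K.Ker.basis_def by auto
  have BC: "B \<subseteq> carrier_vec n" using BK mat_kernel_carrier[OF M] by auto
  have liB: "K.NC.lin_indpt B" using bas K.lindep_same[OF BK] unfolding K.Ker.basis_def by simp
  have inj: "inj_on restrict B"
  proof (rule inj_onI)
    fix x y assume "x \<in> B" "y \<in> B" "restrict x = restrict y"
    then show "x = y"
      using mat_kernel_eq_if_restrict_eq[where m = m and h = h, OF M h vanish, of x y] BK
      unfolding restrict_def by blast
  qed
  have RC: "restrict ` B \<subseteq> carrier_vec m" by (auto simp: restrict_def)
  have "Vm.lin_indpt (restrict ` B)"
  proof (rule Vm.finite_lin_indpt2[OF finite_imageI[OF finB] RC])
    fix a assume lc: "Vm.lincomb a (restrict ` B) = 0\<^sub>v m"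
    define y where "y = K.NC.lincomb (a \<circ> restrict) B"
    have yK: "y \<in> mat_kernel M"
      using K.Ker.lincomb_closed[of B "a \<circ> restrict"] BK K.lincomb_same[OF BK] by (simp add: y_def)
    have "restrict y = 0\<^sub>v m"
    proof (rule eq_vecI)
      fix i assume "i < dim_vec (0\<^sub>v m :: 'a vec)"
      then have i: "i < m" by simp
      have "restrict y $ i = (\<Sum>b\<in>B. a (restrict b) * restrict b $ i)"
        using K.NC.lincomb_index[OF h[OF i] BC] i by (simp add: restrict_def y_def)
      also have "\<dots> = Vm.lincomb a (restrict ` B) $ i"
        unfolding Vm.lincomb_index[OF i RC] sum.reindex[OF inj] by simp
      finally show "restrict y $ i = 0\<^sub>v m $ i" using lc i by simp
    qed (simp add: restrict_def)
    then have "K.NC.lincomb (a \<circ> restrict) B = 0\<^sub>v n"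
      using vanish[OF yK] unfolding restrict_def y_def by blast
    then have "a \<circ> restrict \<in> B \<rightarrow> {0}"
      using K.NC.not_lindepD[OF liB finB subset_refl] by simp
    then show "\<forall>w\<in>restrict ` B. a w = 0" by auto
  qed
  then have "card (restrict ` B) \<le> m" using Vm.li_le_dim(2)[OF Vm.fin_dim RC] Vm.dim_is_n by simp
  then show ?thesis using K.Ker.dim_basis[OF finB bas] card_image[OF inj] by simp
qed

lemma kernel_dim_le_card:
  fixes M :: "'a::field mat"
  assumes M: "M \<in> carrier_mat nr n" and T: "T \<subseteq> {..<n}"
    and vanish: "\<And>x. x \<in> mat_kernel M \<Longrightarrow> (\<forall>t\<in>T. x $ t = 0) \<Longrightarrow> x = 0\<^sub>v n"
  shows "kernel_dim M \<le> card T"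
proof -
  obtain h where h: "bij_betw h {0..<card T} T"
    using ex_bij_betw_nat_finite finite_subset[OF T] by blast
  show ?thesis
  proof (rule kernel_dim_le_restrict[OF M])
    show "h i < n" if "i < card T" for i using bij_betwE[OF h] T that by auto
    fix x assume "x \<in> mat_kernel M" and restrict: "vec (card T) (\<lambda>i. x $ h i) = 0\<^sub>v (card T)"
    have "x $ t = 0" if "t \<in> T" for t
    proof -
      obtain i where "i \<in> {0..<card T}" "t = h i" using h \<open>t \<in> T\<close> unfolding bij_betw_def by blast
      then show ?thesis using arg_cong[OF restrict, of "\<lambda>v. v $ i"] by simp
    qed
    then show "x = 0\<^sub>v n" using vanish[OF \<open>x \<in> mat_kernel M\<close>] by blast
  qed
qed

section \<open>Two-step recurrences\<close>

lemma two_step_recurrence_step: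
  fixes u w x z :: "'a::comm_ring_1"
  assumes "u * x + w * z = 0" and "w * w = 1"
  shows "z = - u * w * x"
proof -
  have "z = w * (w * z)" using assms(2) by (simp add: mult.assoc[symmetric])
  also have "w * z = - u * x" using assms(1) by (simp add: eq_neg_iff_add_eq_0 add.commute)
  finally show ?thesis by (simp add: ac_simps)
qed

lemma two_step_recurrence_closed_form:
  fixes y f :: "nat \<Rightarrow> 'a::comm_ring_1"
  assumes unit: "\<And>k. f k * f k = 1"
    and rec: "\<And>j. j < t \<Longrightarrow> f (a + 2 * j) * y (a + 2 * j) + f (Suc (a + 2 * j)) * y (a + 2 * j + 2) = 0"
  shows "y (a + 2 * t) = (-1) ^ t * (\<Prod>k<2 * t. f (a + k)) * y a"
  using rec
proof (induction t)
  case (Suc t)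
  have "y (a + 2 * t) = (-1) ^ t * (\<Prod>k<2 * t. f (a + k)) * y a"
    using Suc by simp
  moreover have "y (a + 2 * Suc t) = - f (a + 2 * t) * f (Suc (a + 2 * t)) * y (a + 2 * t)"
    using two_step_recurrence_step[OF Suc.prems[of t] unit] by simp
  ultimately show ?case by (simp add: algebra_simps)
qed simp

lemma two_step_recurrence_zero_iff:
  fixes y f :: "nat \<Rightarrow> 'a::idom"
  assumes unit: "\<And>k. f k * f k = 1"
    and rec: "\<And>j. j < t \<Longrightarrow> f (a + 2 * j) * y (a + 2 * j) + f (Suc (a + 2 * j)) * y (a + 2 * j + 2) = 0"
  shows "y (a + 2 * t) = 0 \<longleftrightarrow> y a = 0"
proof -
  have "f k \<noteq> 0" for k using unit[of k] by auto
  then have "(\<Prod>k<2 * t. f (a + k)) \<noteq> 0" by simp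
  then show ?thesis using two_step_recurrence_closed_form[of f, OF unit rec] by simp
qed

lemma two_step_recurrence_vanishes:
  fixes y f :: "nat \<Rightarrow> 'a::idom"
  assumes unit: "\<And>k. f k * f k = 1"
    and rec: "\<And>k. k + 2 \<le> m \<Longrightarrow> f k * y k + f (Suc k) * y (k + 2) = 0"
    and "y 0 = 0" and "odd d\<^sub>1" "d\<^sub>1 \<le> m" "y d\<^sub>1 = 0" and "d \<le> m"
  shows "y d = 0"
proof -
  have zero_iff: "y (a + 2 * t) = 0 \<longleftrightarrow> y a = 0" if "a + 2 * t \<le> m" for a t
    by (rule two_step_recurrence_zero_iff[of f, OF unit]) (use rec that in simp)
  show ?thesis
  proof (cases "even d")
    case True
    then show ?thesis using zero_iff[of 0 "d div 2"] assms by simp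
  next
    case False
    let ?lo = "min d d\<^sub>1" and ?hi = "max d d\<^sub>1"
    have "?hi = ?lo + 2 * ((?hi - ?lo) div 2)" using False assms by presburger
    then have "y ?hi = 0 \<longleftrightarrow> y ?lo = 0" using zero_iff[of ?lo "(?hi - ?lo) div 2"] assms by simp
    then show ?thesis using assms by (cases "d \<le> d\<^sub>1") auto
  qed
qed

lemma cyclic_adjacent_eq_iff:
  "(\<forall>i<length xs. h (xs ! (Suc i mod length xs)) = h (xs ! i)) \<longleftrightarrow> (\<forall>x\<in>set xs. \<forall>y\<in>set xs. h x = h y)"
proof
  assume adj: "\<forall>i<length xs. h (xs ! (Suc i mod length xs)) = h (xs ! i)"
  have "h (xs ! i) = h (xs ! 0)" if "i < length xs" for i
    using that
  proof (induction i)
    case (Suc i)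
    then show ?case using adj[rule_format, of i] by simp
  qed simp
  then show "\<forall>x\<in>set xs. \<forall>y\<in>set xs. h x = h y" by (metis in_set_conv_nth)
next
  assume "\<forall>x\<in>set xs. \<forall>y\<in>set xs. h x = h y"
  moreover have "Suc i mod length xs < length xs" if "i < length xs" for i
    by (rule mod_less_divisor) (use that in linarith)
  ultimately show "\<forall>i<length xs. h (xs ! (Suc i mod length xs)) = h (xs ! i)"
    by (meson nth_mem)
qed

lemma prod_lessThan_add: "(\<Prod>k<m + (p::nat). h k) = (\<Prod>k<m. h k) * (\<Prod>k<p. h (m + k))"
  by (induction p) (simp_all add: mult.assoc)

section \<open>Canonical unicyclic signed graphs\<close>

locale canonical_unicyclic =
  fixes n :: nat and E :: "nat \<Rightarrow> nat \<Rightarrow> bool" and sg :: "nat \<Rightarrow> nat \<Rightarrow> real"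
    and cs :: "nat list"
  assumes signed: "signed_graph n E sg" and canonical: "canonical_with n E cs"
begin

abbreviation g :: nat where "g \<equiv> length cs"

definition cyc :: "nat \<Rightarrow> nat" where "cyc i = cs ! (i mod g)"

lemma edge_sym: "E u v \<Longrightarrow> E v u"
  and edge_less: "E u v \<Longrightarrow> u < n \<and> v < n"
  and edge_irrefl: "E u v \<Longrightarrow> u \<noteq> v"
  and sign_sym: "E u v \<Longrightarrow> sg u v = sg v u"
  using signed unfolding signed_graph_def simple_graph_def by auto

lemma sign_square: "E u v \<Longrightarrow> sg u v * sg u v = 1"
proof -
  assume "E u v"
  then have "sg u v = 1 \<or> sg u v = -1" using signed unfolding signed_graph_def by blast
  then show ?thesis by auto
qed

lemma is_cycle: "is_cycle E cs"
  and unique_cycle: "is_cycle E ds \<Longrightarrow> cycle_edges ds = cycle_edges cs"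
  using canonical unfolding canonical_with_def unicyclic_with_def by blast+

lemma length_ge_3: "g \<ge> 3" and distinct_cs: "distinct cs"
  using is_cycle unfolding is_cycle_def by auto

lemma length_pos: "g > 0" using length_ge_3 by linarith

lemma cyc_mod: "cyc (i mod g) = cyc i"
  and cyc_add_length: "cyc (i + g) = cyc i"
  and nth_cs_eq_cyc: "j < g \<Longrightarrow> cs ! j = cyc j"
  and cyc_in_set: "cyc i \<in> set cs"
  unfolding cyc_def using length_pos by auto

lemma cyc_eq_iff: "cyc i = cyc j \<longleftrightarrow> i mod g = j mod g"
  unfolding cyc_def using distinct_cs length_pos by (simp add: nth_eq_iff_index_eq)

lemma in_set_csE:
  assumes "v \<in> set cs" obtains j where "j < g" "v = cyc j"
  using assms by (auto simp: in_set_conv_nth nth_cs_eq_cyc)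

lemma edge_cyc: "E (cyc i) (cyc (Suc i))"
proof -
  have "E (cs ! (i mod g)) (cs ! ((i mod g + 1) mod g))"
    using is_cycle length_pos unfolding is_cycle_def by simp
  then show ?thesis unfolding cyc_def by (simp add: mod_Suc_eq)
qed

lemma cyc_less: "cyc i < n" using edge_cyc edge_less by blast

lemma set_cs_subset: "set cs \<subseteq> {..<n}"
  using cyc_less by (auto elim: in_set_csE)

lemma Suc_mod_length_eq_iff: "Suc i mod g = Suc j mod g \<longleftrightarrow> i mod g = j mod g"
proof
  show "Suc i mod g = Suc j mod g \<Longrightarrow> i mod g = j mod g"
    using mod_Suc[of i g] mod_Suc[of j g] by (auto split: if_splits)
qed (metis mod_Suc_eq)

lemma segment_is_cycle:
  assumes ab: "a + 2 \<le> b" "b < g" and chord: "E (cs ! b) (cs ! a)"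
  shows "is_cycle E (take (b - a + 1) (drop a cs))" (is "is_cycle E ?ds")
  unfolding is_cycle_def
proof (intro conjI allI impI)
  have len: "length ?ds = b - a + 1" using ab by simp
  have nth: "?ds ! k = cs ! (a + k)" if "k < length ?ds" for k
    using that ab by simp
  show "3 \<le> length ?ds" using len ab by simp
  show "distinct ?ds" using distinct_cs by (simp add: distinct_take distinct_drop)
  fix k assume k: "k < length ?ds"
  show "E (?ds ! k) (?ds ! ((k + 1) mod length ?ds))"
  proof (cases "k + 1 < length ?ds")
    case True
    then show ?thesis
      using nth[OF k] nth[OF True] edge_cyc[of "a + k"] len ab by (simp add: nth_cs_eq_cyc)
  next
    case False
    then have "k = b - a" using k len by linarith
    then have "(k + 1) mod length ?ds = 0" using len by simp
    then show ?thesis using nth[OF k] nth[of 0] chord ab len \<open>k = b - a\<close> by simp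
  qed
qed

lemma cycle_edge_adjacent:
  assumes "{cs ! a, cs ! b} \<in> cycle_edges cs" and ab: "a < g" "b < g"
  shows "b = Suc a mod g \<or> a = Suc b mod g"
proof -
  obtain k where k: "k < g" and edge: "{cs ! a, cs ! b} = {cs ! k, cs ! (Suc k mod g)}"
    using assms(1) unfolding cycle_edges_def by auto
  have "Suc k mod g < g" using length_pos by simp
  then have "cs ! x = cs ! y \<longleftrightarrow> x = y" if "x \<in> {a, b, k, Suc k mod g}" "y \<in> {a, b, k, Suc k mod g}" for x y
    using that ab k distinct_cs by (auto simp: nth_eq_iff_index_eq)
  then show ?thesis using edge by (auto simp: doubleton_eq_iff)
qed

lemma chord_positions:
  assumes ab: "a < b" "b < g" and chord: "E (cs ! a) (cs ! b)"
  shows "b = Suc a \<or> (a = 0 \<and> b = g - 1)"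
proof (rule ccontr)
  assume "\<not> ?thesis"
  then have far: "a + 2 \<le> b" and not_wrap: "\<not> (a = 0 \<and> b = g - 1)" using ab by auto
  let ?ds = "take (b - a + 1) (drop a cs)"
  have "b - a < length ?ds" using ab by simp
  then have "{?ds ! (b - a), ?ds ! ((b - a + 1) mod length ?ds)} \<in> cycle_edges ?ds"
    unfolding cycle_edges_def by blast
  moreover have "?ds ! (b - a) = cs ! b" "?ds ! ((b - a + 1) mod length ?ds) = cs ! a"
    using ab by auto
  ultimately have "{cs ! b, cs ! a} \<in> cycle_edges cs"
    using unique_cycle[OF segment_is_cycle[OF far ab(2) edge_sym[OF chord]]] by simp
  then have "a = Suc b mod g \<or> b = Suc a mod g" using cycle_edge_adjacent[of b a] ab by auto
  then show False using far not_wrap ab by (auto simp: mod_Suc split: if_splits)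
qed

lemma chordless: "E (cyc i) (cyc j) \<Longrightarrow> cyc j = cyc (Suc i) \<or> cyc i = cyc (Suc j)"
proof -
  assume edge: "E (cyc i) (cyc j)"
  define a b where "a = i mod g" and "b = j mod g"
  have ab: "a < g" "b < g" using length_pos by (auto simp: a_def b_def)
  have edge': "E (cs ! a) (cs ! b)" using edge by (simp add: cyc_def a_def b_def)
  have "a \<noteq> b" using edge_irrefl[OF edge'] by auto
  then consider "a < b" | "b < a" by linarith
  then have "b = Suc a mod g \<or> a = Suc b mod g"
  proof cases
    case 1
    then show ?thesis using chord_positions[OF 1 ab(2) edge'] ab length_pos by auto
  next
    case 2
    then show ?thesis using chord_positions[OF 2 ab(1) edge_sym[OF edge']] ab length_pos by auto
  qed
  then show ?thesis unfolding cyc_eq_iff a_def b_def by (auto simp: mod_Suc_eq)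
qed

lemma cyc_Suc_eq_iff: "cyc (Suc i) = cyc (Suc j) \<longleftrightarrow> cyc i = cyc j"
  unfolding cyc_eq_iff by (rule Suc_mod_length_eq_iff)

text \<open>In a canonical graph every vertex off the cycle is a pendant vertex attached to the cycle.\<close>
definition pendants :: "nat set" where "pendants = {v. v < n \<and> v \<notin> set cs}"

definition root :: "nat \<Rightarrow> nat" where "root p = (THE w. w \<in> set cs \<and> E p w)"

definition pendants_at :: "nat \<Rightarrow> nat set" where "pendants_at u = {p \<in> pendants. E u p}"

lemma finite_pendants: "finite pendants"
  unfolding pendants_def by auto

lemma card_pendants: "card pendants = n - g"
proof -
  have "pendants = {..<n} - set cs" unfolding pendants_def by auto
  then show ?thesis
    using set_cs_subset distinct_card[OF distinct_cs] by (simp add: card_Diff_subset)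
qed

lemma pendants_less: "p \<in> pendants \<Longrightarrow> p < n"
  and cyc_notin_pendants: "cyc i \<notin> pendants"
  unfolding pendants_def using cyc_in_set by auto

lemma pendant_unique_neighbour:
  assumes "p \<in> pendants" shows "\<exists>!w. w \<in> set cs \<and> E p w"
  using canonical assms unfolding canonical_with_def pendants_def by blast

lemma pendants_independent: "p \<in> pendants \<Longrightarrow> q \<in> pendants \<Longrightarrow> \<not> E p q"
  using canonical unfolding canonical_with_def pendants_def by blast

lemma root_in_set: "p \<in> pendants \<Longrightarrow> root p \<in> set cs"
  and edge_root: "p \<in> pendants \<Longrightarrow> E p (root p)"
  unfolding root_def using theI'[OF pendant_unique_neighbour] by blast+

lemma pendant_edge_iff:
  assumes p: "p \<in> pendants"
  shows "E p w \<longleftrightarrow> w = root p"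
proof
  assume edge: "E p w"
  have "w \<in> set cs"
    using pendants_independent[OF p, of w] edge_less[OF edge] edge by (auto simp: pendants_def)
  then show "w = root p"
    using edge root_in_set[OF p] edge_root[OF p] pendant_unique_neighbour[OF p] by blast
qed (use edge_root p in simp)

lemma pendants_at_iff: "p \<in> pendants_at u \<longleftrightarrow> p \<in> pendants \<and> root p = u"
  unfolding pendants_at_def using pendant_edge_iff[of p u] edge_sym[of u p] edge_sym[of p u] by auto

lemma finite_pendants_at: "finite (pendants_at u)"
  using finite_pendants by (simp add: pendants_at_def)

lemma neighbours_cyc: "{w. E (cyc (Suc i)) w} = {cyc i, cyc (i + 2)} \<union> pendants_at (cyc (Suc i))"
proof (intro equalityI subsetI)
  fix w assume "w \<in> {w. E (cyc (Suc i)) w}"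
  then have edge: "E (cyc (Suc i)) w" by simp
  show "w \<in> {cyc i, cyc (i + 2)} \<union> pendants_at (cyc (Suc i))"
  proof (cases "w \<in> set cs")
    case True
    then obtain j where w: "w = cyc j" by (rule in_set_csE)
    have "cyc j = cyc (Suc (Suc i)) \<or> cyc (Suc i) = cyc (Suc j)"
      using chordless edge w by blast
    then show ?thesis using w cyc_Suc_eq_iff by (auto simp: numeral_2_eq_2)
  next
    case False
    then show ?thesis using edge edge_less by (simp add: pendants_at_def pendants_def)
  qed
next
  fix w assume "w \<in> {cyc i, cyc (i + 2)} \<union> pendants_at (cyc (Suc i))"
  then show "w \<in> {w. E (cyc (Suc i)) w}"
    using edge_sym[OF edge_cyc[of i]] edge_cyc[of "Suc i"]
    by (auto simp: pendants_at_def numeral_2_eq_2)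
qed

lemma cyc_Suc_Suc_neq: "cyc i \<noteq> cyc (i + 2)"
proof
  assume "cyc i = cyc (i + 2)"
  then have "g dvd 2" using cyc_eq_iff mod_eq_dvd_iff_nat[of i "i + 2" g] by simp
  then show False using length_ge_3 by (auto dest: dvd_imp_le)
qed

lemma vertex_cases:
  assumes "u < n" obtains "u \<in> pendants" | i where "u = cyc (Suc i)"
proof (cases "u \<in> set cs")
  case True
  then obtain j where "u = cyc j" by (rule in_set_csE)
  then have "u = cyc (Suc (j + g - 1))" using cyc_add_length[of j] length_pos by simp
  then show ?thesis using that by blast
qed (use assms that in \<open>auto simp: pendants_def\<close>)

abbreviation \<sigma> :: "nat \<Rightarrow> nat \<Rightarrow> complex" where "\<sigma> u w \<equiv> complex_of_real (sg u w)"

definition Adj :: "complex mat" where "Adj = map_mat complex_of_real (adj_matrix n E sg)"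

definition cyc_sign :: "nat \<Rightarrow> complex" where "cyc_sign i = \<sigma> (cyc i) (cyc (Suc i))"

definition pendant_sum :: "complex vec \<Rightarrow> nat \<Rightarrow> complex" where
  "pendant_sum x u = (\<Sum>p\<in>pendants_at u. \<sigma> u p * x $ p)"

lemma sign_nonzero: "E u v \<Longrightarrow> sg u v \<noteq> 0"
  using sign_square by force

lemma \<sigma>_square: "E u v \<Longrightarrow> \<sigma> u v * \<sigma> u v = 1"
  using sign_square by (metis of_real_1 of_real_mult)

lemma \<sigma>_nonzero: "E u v \<Longrightarrow> \<sigma> u v \<noteq> 0"
  using \<sigma>_square by force

lemma cyc_sign_square: "cyc_sign i * cyc_sign i = 1"
  unfolding cyc_sign_def using \<sigma>_square[OF edge_cyc] .

lemma cyc_sign_cong: "i mod g = j mod g \<Longrightarrow> cyc_sign i = cyc_sign j"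
  unfolding cyc_sign_def using cyc_eq_iff Suc_mod_length_eq_iff by metis

lemma Adj_carrier: "Adj \<in> carrier_mat n n"
  by (simp add: Adj_def adj_matrix_def)

lemma nullity_eq_kernel_dim: "nullity n E sg = kernel_dim Adj"
  unfolding nullity_def Adj_def
  by (rule order_zero_char_poly_symmetric[of _ n])
    (auto simp: adj_matrix_def dest: edge_sym sign_sym)

lemma Adj_row:
  assumes x: "x \<in> carrier_vec n" and u: "u < n"
  shows "(Adj *\<^sub>v x) $ u = (\<Sum>w\<in>{w. E u w}. \<sigma> u w * x $ w)"
proof -
  have "(Adj *\<^sub>v x) $ u = (\<Sum>w<n. Adj $$ (u, w) * x $ w)"
    by (rule mult_mat_vec_index_sum[OF Adj_carrier x u])
  also have "\<dots> = (\<Sum>w<n. if E u w then \<sigma> u w * x $ w else 0)"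
    using u by (intro sum.cong refl) (simp add: Adj_def adj_matrix_def)
  also have "\<dots> = (\<Sum>w\<in>{w \<in> {..<n}. E u w}. \<sigma> u w * x $ w)"
    by (rule sum.inter_filter[symmetric]) simp
  also have "{w \<in> {..<n}. E u w} = {w. E u w}" using edge_less by auto
  finally show ?thesis .
qed

lemma Adj_row_pendant:
  assumes "x \<in> carrier_vec n" "p \<in> pendants"
  shows "(Adj *\<^sub>v x) $ p = \<sigma> p (root p) * x $ root p"
proof -
  have "{w. E p w} = {root p}" using pendant_edge_iff[OF assms(2)] by auto
  then show ?thesis using Adj_row[OF assms(1) pendants_less[OF assms(2)]] by simp
qed

lemma Adj_row_cyc:
  assumes x: "x \<in> carrier_vec n"
  shows "(Adj *\<^sub>v x) $ cyc (Suc i)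
    = cyc_sign i * x $ cyc i + cyc_sign (Suc i) * x $ cyc (i + 2) + pendant_sum x (cyc (Suc i))"
proof -
  let ?h = "\<lambda>w. \<sigma> (cyc (Suc i)) w * x $ w"
  have "(Adj *\<^sub>v x) $ cyc (Suc i) = sum ?h {cyc i, cyc (i + 2)} + pendant_sum x (cyc (Suc i))"
    unfolding Adj_row[OF x cyc_less] neighbours_cyc pendant_sum_def
    by (rule sum.union_disjoint) (auto simp: finite_pendants_at pendants_at_iff cyc_notin_pendants)
  moreover have "\<sigma> (cyc (Suc i)) (cyc i) = cyc_sign i"
    unfolding cyc_sign_def using sign_sym[OF edge_cyc] by simp
  ultimately show ?thesis
    using cyc_Suc_Suc_neq[of i] by (simp add: cyc_sign_def numeral_2_eq_2)
qed

lemma mat_kernel_Adj_iff: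
  "x \<in> mat_kernel Adj \<longleftrightarrow> x \<in> carrier_vec n \<and> (\<forall>p\<in>pendants. x $ root p = 0) \<and>
     (\<forall>i. cyc_sign i * x $ cyc i + cyc_sign (Suc i) * x $ cyc (i + 2) + pendant_sum x (cyc (Suc i)) = 0)"
proof (cases "x \<in> carrier_vec n")
  case x: True
  have "x \<in> mat_kernel Adj \<longleftrightarrow> (\<forall>u<n. (Adj *\<^sub>v x) $ u = 0)"
    using x Adj_carrier by (auto simp: mat_kernel_def vec_eq_iff)
  also have "\<dots> \<longleftrightarrow> (\<forall>p\<in>pendants. (Adj *\<^sub>v x) $ p = 0) \<and> (\<forall>i. (Adj *\<^sub>v x) $ cyc (Suc i) = 0)"
    by (auto intro: pendants_less cyc_less elim: vertex_cases)
  also have "\<dots> \<longleftrightarrow> (\<forall>p\<in>pendants. x $ root p = 0) \<and>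
     (\<forall>i. cyc_sign i * x $ cyc i + cyc_sign (Suc i) * x $ cyc (i + 2) + pendant_sum x (cyc (Suc i)) = 0)"
    using x by (simp add: Adj_row_pendant Adj_row_cyc sign_nonzero edge_root)
  finally show ?thesis using x by simp
qed (use Adj_carrier in \<open>auto simp: mat_kernel_def\<close>)

definition majors :: "nat set" where
  "majors = {i. i < g \<and> major_vertex n E cs (cs ! i)}"

lemma majors_iff: "i \<in> majors \<longleftrightarrow> i < g \<and> pendants_at (cyc i) \<noteq> {}"
  unfolding majors_def major_vertex_def pendants_at_def pendants_def
  using nth_cs_eq_cyc[of i] cyc_in_set[of i] by auto

lemma pendants_at_cyc_iff: "pendants_at (cyc i) \<noteq> {} \<longleftrightarrow> i mod g \<in> majors"
  using majors_iff[of "i mod g"] cyc_mod[of i] length_pos by simp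

lemma finite_majors: "finite majors"
  unfolding majors_def by simp

lemma major_positions_eq: "major_positions n E cs = sorted_list_of_set majors"
  unfolding major_positions_def majors_def ..

lemma root_major: assumes "p \<in> pendants" obtains e where "e \<in> majors" "root p = cyc e"
proof -
  obtain e where e: "e < g" "root p = cyc e" using root_in_set[OF assms] by (rule in_set_csE)
  then have "p \<in> pendants_at (cyc e)" using assms pendants_at_iff by simp
  then show ?thesis using that e majors_iff by blast
qed

lemma gap_odd_iff:
  assumes "even g"
  shows "(\<forall>i<length (major_positions n E cs). odd (gap n E cs i))
    \<longleftrightarrow> (\<forall>a\<in>majors. \<forall>b\<in>majors. even a = even b)"
proof -
  define ms where "ms = sorted_list_of_set majors"
  have odd_mod: "odd (X mod int g) \<longleftrightarrow> odd X" for X :: int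
  proof -
    have "(2::int) dvd int g" using assms by simp
    then have "X mod int g mod 2 = X mod 2" by (rule mod_mod_cancel)
    then show ?thesis by (simp add: even_iff_mod_2_eq_zero)
  qed
  have "odd (gap n E cs i) \<longleftrightarrow> even (ms ! (Suc i mod length ms)) = even (ms ! i)" for i
  proof -
    have "odd (int a - int b - 1) \<longleftrightarrow> even a = even b" for a b by presburger
    then show ?thesis unfolding gap_def major_positions_eq ms_def[symmetric] Let_def odd_mod by simp
  qed
  then have "(\<forall>i<length ms. odd (gap n E cs i)) \<longleftrightarrow> (\<forall>a\<in>set ms. \<forall>b\<in>set ms. even a = even b)"
    using cyclic_adjacent_eq_iff[where h = even and xs = ms] by simp
  then show ?thesis using finite_majors by (simp add: major_positions_eq ms_def)
qed

definition pos :: "nat \<Rightarrow> nat" where "pos v = (THE j. j < g \<and> cs ! j = v)"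

definition pendant_rep :: "nat \<Rightarrow> nat" where "pendant_rep u = (SOME p. p \<in> pendants_at u)"

definition cycle_nbr_sum :: "(nat \<Rightarrow> complex) \<Rightarrow> nat \<Rightarrow> complex" where
  "cycle_nbr_sum y u = (\<Sum>w\<in>set cs \<inter> {w. E u w}. \<sigma> u w * y (pos w))"

text \<open>The correction at the chosen pendant of a major vertex makes the equation of that vertex hold.\<close>
definition extension :: "(nat \<Rightarrow> complex) \<Rightarrow> complex vec" where
  "extension y = vec n (\<lambda>v. if v \<in> set cs then y (pos v)
     else if v \<in> pendants \<and> v = pendant_rep (root v) then - \<sigma> (root v) v * cycle_nbr_sum y (root v)
     else 0)"

lemma pos_cyc: "pos (cyc j) = j mod g"
  unfolding pos_def
proof (rule the_equality)
  show "j mod g < g \<and> cs ! (j mod g) = cyc j" using length_pos by (simp add: cyc_def)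
  show "k = j mod g" if "k < g \<and> cs ! k = cyc j" for k
    using that length_pos distinct_cs nth_eq_iff_index_eq[of cs k "j mod g"] by (simp add: cyc_def)
qed

lemma pendant_rep_in: "pendants_at u \<noteq> {} \<Longrightarrow> pendant_rep u \<in> pendants_at u"
  unfolding pendant_rep_def by (rule someI_ex) blast

lemma cycle_nbr_sum_cyc:
  "cycle_nbr_sum y (cyc (Suc i)) = cyc_sign i * y (i mod g) + cyc_sign (Suc i) * y ((i + 2) mod g)"
proof -
  have "set cs \<inter> {w. E (cyc (Suc i)) w} = {cyc i, cyc (i + 2)}"
    unfolding neighbours_cyc using cyc_in_set by (auto simp: pendants_at_def pendants_def)
  moreover have "\<sigma> (cyc (Suc i)) (cyc i) = cyc_sign i"
    unfolding cyc_sign_def using sign_sym[OF edge_cyc] by simp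
  ultimately show ?thesis
    using cyc_Suc_Suc_neq[of i] by (simp add: cycle_nbr_sum_def pos_cyc cyc_sign_def numeral_2_eq_2)
qed

lemma extension_carrier: "extension y \<in> carrier_vec n"
  by (simp add: extension_def)

lemma extension_cyc: "extension y $ cyc j = y (j mod g)"
  using cyc_less cyc_in_set by (simp add: extension_def pos_cyc)

lemma extension_pendant: "p \<in> pendants \<Longrightarrow> p \<noteq> pendant_rep (root p) \<Longrightarrow> extension y $ p = 0"
  by (simp add: extension_def pendants_def)

lemma pendant_sum_extension:
  assumes "i mod g \<in> majors"
  shows "pendant_sum (extension y) (cyc i) = - cycle_nbr_sum y (cyc i)"
proof -
  let ?u = "cyc i" and ?r = "pendant_rep (cyc i)"
  let ?h = "\<lambda>p. \<sigma> ?u p * extension y $ p"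
  have r: "?r \<in> pendants_at ?u" using assms pendants_at_cyc_iff pendant_rep_in by blast
  then have r': "?r \<in> pendants" "root ?r = ?u" "E ?u ?r" using pendants_at_iff
    by (auto simp: pendants_at_def)
  have "pendant_sum (extension y) ?u = ?h ?r + sum ?h (pendants_at ?u - {?r})"
    unfolding pendant_sum_def by (rule sum.remove[OF finite_pendants_at r])
  also have "sum ?h (pendants_at ?u - {?r}) = 0"
    by (rule sum.neutral) (auto simp: pendants_at_iff extension_pendant)
  also have "?h ?r = - (\<sigma> ?u ?r * \<sigma> ?u ?r) * cycle_nbr_sum y ?u"
    using r' pendants_less[OF r'(1)] by (simp add: extension_def pendants_def)
  finally show ?thesis using \<sigma>_square[OF r'(3)] by simp
qed

lemma extension_in_kernel:
  assumes majors_zero: "\<And>a. a \<in> majors \<Longrightarrow> y a = 0"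
    and rec: "\<And>i. Suc i mod g \<notin> majors \<Longrightarrow>
      cyc_sign i * y (i mod g) + cyc_sign (Suc i) * y ((i + 2) mod g) = 0"
  shows "extension y \<in> mat_kernel Adj"
  unfolding mat_kernel_Adj_iff
proof (intro conjI ballI allI extension_carrier)
  fix p assume "p \<in> pendants"
  then obtain e where "e \<in> majors" "root p = cyc e" by (rule root_major)
  then show "extension y $ root p = 0"
    using majors_zero majors_iff by (simp add: extension_cyc)
next
  fix i
  show "cyc_sign i * extension y $ cyc i + cyc_sign (Suc i) * extension y $ cyc (i + 2)
      + pendant_sum (extension y) (cyc (Suc i)) = 0"
  proof (cases "Suc i mod g \<in> majors")
    case True
    then show ?thesis by (simp add: pendant_sum_extension extension_cyc cycle_nbr_sum_cyc)
  next
    case False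
    then have "pendants_at (cyc (Suc i)) = {}" using pendants_at_cyc_iff by blast
    then show ?thesis using rec[OF False] by (simp add: pendant_sum_def extension_cyc)
  qed
qed

section \<open>The cycle\<close>

definition cycle_sign :: complex where "cycle_sign = (\<Prod>i<g. cyc_sign i)"

lemma balanced_cycle_iff: "balanced_cycle sg cs \<longleftrightarrow> cycle_sign = 1"
proof -
  have "cycle_sign = complex_of_real (\<Prod>i<g. sg (cs ! i) (cs ! ((i + 1) mod g)))"
    by (simp add: cycle_sign_def cyc_sign_def cyc_def)
  then show ?thesis unfolding balanced_cycle_def by (metis of_real_eq_1_iff)
qed

lemma prod_cyc_sign_shift: "(\<Prod>k<g. cyc_sign (a + k)) = cycle_sign"
proof (induction a)
  case (Suc a)
  obtain m where g: "g = Suc m" using length_pos by (cases g) auto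
  have "(\<Prod>k<g. cyc_sign (Suc a + k)) = (\<Prod>k<m. cyc_sign (Suc a + k)) * cyc_sign (a + g)"
    unfolding g prod.lessThan_Suc by simp
  also have "cyc_sign (a + g) = cyc_sign a" by (rule cyc_sign_cong) simp
  also have "(\<Prod>k<m. cyc_sign (Suc a + k)) * cyc_sign a = (\<Prod>k<g. cyc_sign (a + k))"
    unfolding g prod.lessThan_Suc_shift by (simp add: mult.commute)
  finally show ?case using Suc by simp
qed (simp add: cycle_sign_def)

lemma cycle_sign_square: "cycle_sign * cycle_sign = 1"
  unfolding cycle_sign_def prod.distrib[symmetric] cyc_sign_square by simp

lemma cycle_sign_cases: "cycle_sign = 1 \<or> cycle_sign = -1"
proof -
  have "(cycle_sign - 1) * (cycle_sign + 1) = 0" using cycle_sign_square by (simp add: algebra_simps)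
  then show ?thesis by (auto simp: eq_neg_iff_add_eq_0)
qed

lemma kernel_cycle_recurrence:
  assumes "pendants = {}" and "x \<in> mat_kernel Adj"
  shows "cyc_sign i * x $ cyc i + cyc_sign (Suc i) * x $ cyc (i + 2) = 0"
  using assms by (simp add: mat_kernel_Adj_iff pendant_sum_def pendants_at_def)

lemma cycle_kernel_trivial:
  assumes no_pendants: "pendants = {}" and cond: "odd g \<or> (-1) ^ (g div 2) * cycle_sign = -1"
    and x: "x \<in> mat_kernel Adj"
  shows "x = 0\<^sub>v n"
proof -
  let ?y = "\<lambda>k. x $ cyc k"
  have closed_form: "?y (a + 2 * t) = (-1) ^ t * (\<Prod>k<2 * t. cyc_sign (a + k)) * ?y a" for a t
    by (rule two_step_recurrence_closed_form[OF cyc_sign_square])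
      (use kernel_cycle_recurrence[OF no_pendants x] in \<open>simp add: add.assoc\<close>)
  have "?y a = - ?y a" for a
  proof (cases "odd g")
    case True
    have "(\<Prod>k<2 * g. cyc_sign (a + k)) = cycle_sign * cycle_sign"
      unfolding mult_2 prod_lessThan_add prod_cyc_sign_shift add.assoc[symmetric] ..
    moreover have "cyc (a + 2 * g) = cyc a" using cyc_add_length[of "a + g"] cyc_add_length[of a]
      by (simp add: mult_2 add.assoc)
    ultimately show ?thesis using closed_form[of a g] True cycle_sign_square by simp
  next
    case False
    then have "2 * (g div 2) = g" by simp
    then have "?y (a + g) = (-1) ^ (g div 2) * cycle_sign * ?y a"
      using closed_form[of a "g div 2"] prod_cyc_sign_shift[of a] by simp
    then show ?thesis using cond False cyc_add_length[of a] by simp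
  qed
  then have zero: "?y a = 0" for a by (simp add: eq_neg_iff_add_eq_0)
  have "x $ v = 0" if "v < n" for v
  proof -
    have "v \<in> set cs" using no_pendants that by (auto simp: pendants_def)
    then show ?thesis using zero by (auto elim: in_set_csE)
  qed
  then show ?thesis using x by (intro eq_vecI) (auto simp: mat_kernel_Adj_iff)
qed

definition signed_prefix_product :: "nat \<Rightarrow> complex" where
  "signed_prefix_product j = (if even j then (-1) ^ (j div 2) * (\<Prod>k<j. cyc_sign k) else 0)"

lemma signed_prefix_product_recurrence:
  "cyc_sign i * signed_prefix_product i + cyc_sign (Suc i) * signed_prefix_product (i + 2) = 0"
proof (cases "even i")
  case True
  moreover have "(i + 2) div 2 = Suc (i div 2)" by simp
  moreover have "(\<Prod>k<i + 2. cyc_sign k) = (\<Prod>k<i. cyc_sign k) * cyc_sign i * cyc_sign (Suc i)"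
    by (simp add: numeral_2_eq_2)
  ultimately have "signed_prefix_product (i + 2)
      = - cyc_sign i * cyc_sign (Suc i) * signed_prefix_product i"
    by (simp add: signed_prefix_product_def ac_simps)
  then show ?thesis using cyc_sign_square[of "Suc i"] by (simp add: algebra_simps)
qed (simp add: signed_prefix_product_def)

lemma signed_prefix_product_mod:
  assumes "even g" and periodic: "(-1) ^ (g div 2) * cycle_sign = 1"
  shows "signed_prefix_product (j mod g) = signed_prefix_product j"
proof -
  have shift: "signed_prefix_product (j + g) = signed_prefix_product j" for j
  proof (cases "even j")
    case True
    have "(\<Prod>k<j + g. cyc_sign k) = (\<Prod>k<j. cyc_sign k) * cycle_sign"
      unfolding prod_lessThan_add prod_cyc_sign_shift ..
    moreover have "(j + g) div 2 = j div 2 + g div 2" using True \<open>even g\<close> by auto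
    ultimately have "signed_prefix_product (j + g)
        = signed_prefix_product j * ((-1) ^ (g div 2) * cycle_sign)"
      using True \<open>even g\<close> by (simp add: signed_prefix_product_def power_add ac_simps)
    then show ?thesis using periodic by simp
  qed (use \<open>even g\<close> in \<open>simp add: signed_prefix_product_def\<close>)
  have "signed_prefix_product (j mod g + g * q) = signed_prefix_product (j mod g)" for q
  proof (induction q)
    case (Suc q)
    have "j mod g + g * Suc q = (j mod g + g * q) + g" by simp
    then show ?case using shift[of "j mod g + g * q"] Suc.IH by metis
  qed simp
  then show ?thesis by (metis mod_mult_div_eq)
qed

lemma cycle_kernel_nontrivial:
  assumes no_pendants: "pendants = {}" and "even g" and periodic: "(-1) ^ (g div 2) * cycle_sign = 1"
  shows "extension signed_prefix_product \<in> mat_kernel Adj"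
    and "extension signed_prefix_product $ cyc 0 = 1"
proof -
  have "majors = {}" using no_pendants by (auto simp: majors_iff pendants_at_def)
  then show "extension signed_prefix_product \<in> mat_kernel Adj"
    using signed_prefix_product_recurrence
    by (intro extension_in_kernel) (simp_all add: signed_prefix_product_mod[OF \<open>even g\<close> periodic])
  show "extension signed_prefix_product $ cyc 0 = 1"
    by (simp add: extension_cyc signed_prefix_product_def)
qed

theorem nullity_cycle:
  assumes cycle: "set cs = {0..<n}"
  shows "nullity n E sg = n - g \<longleftrightarrow> odd g \<or> (balanced_cycle sg cs \<and> g mod 4 = 2)
    \<or> (\<not> balanced_cycle sg cs \<and> g mod 4 = 0)"
proof -
  have no_pendants: "pendants = {}" using cycle by (auto simp: pendants_def)
  have "n - g = 0" using cycle distinct_card[OF distinct_cs] by simp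
  have "g mod 4 = 2 \<longleftrightarrow> even g \<and> odd (g div 2)" "g mod 4 = 0 \<longleftrightarrow> even g \<and> even (g div 2)"
    by presburger+
  then have cond: "(odd g \<or> (balanced_cycle sg cs \<and> g mod 4 = 2) \<or> (\<not> balanced_cycle sg cs \<and> g mod 4 = 0))
      \<longleftrightarrow> odd g \<or> (-1) ^ (g div 2) * cycle_sign = -1"
    using cycle_sign_cases by (cases "even (g div 2)") (auto simp: balanced_cycle_iff)
  show ?thesis
    unfolding \<open>n - g = 0\<close> nullity_eq_kernel_dim cond
  proof
    assume "kernel_dim Adj = 0"
    show "odd g \<or> (-1) ^ (g div 2) * cycle_sign = -1"
    proof (rule ccontr)
      assume "\<not> ?thesis"
      then have "even g" "(-1) ^ (g div 2) * cycle_sign = 1"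
        using cycle_sign_cases by (auto simp: minus_one_power_iff)
      note kernel = cycle_kernel_nontrivial[OF no_pendants this]
      have "card {()} \<le> kernel_dim Adj"
        by (rule kernel_dim_ge_card[OF Adj_carrier, where v = "\<lambda>_. extension signed_prefix_product"
          and p = "\<lambda>_. cyc 0"]) (use kernel cyc_less in auto)
      with \<open>kernel_dim Adj = 0\<close> show False by simp
    qed
  next
    assume "odd g \<or> (-1) ^ (g div 2) * cycle_sign = -1"
    then have "kernel_dim Adj \<le> card ({} :: nat set)"
      by (intro kernel_dim_le_card[OF Adj_carrier]) (auto intro: cycle_kernel_trivial[OF no_pendants])
    then show "kernel_dim Adj = 0" by simp
  qed
qed

section \<open>Graphs with pendant vertices\<close>

definition offset :: "nat \<Rightarrow> nat \<Rightarrow> nat" where "offset a j = (j + (g - a)) mod g"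

lemma offset_less: "offset a j < g"
  using length_pos by (simp add: offset_def)

lemma offset_mod: "offset a (j mod g) = offset a j"
  by (simp add: offset_def mod_add_left_eq)

lemma add_offset_mod: "a < g \<Longrightarrow> (a + offset a j) mod g = j mod g"
proof -
  assume "a < g"
  then have "a + (j + (g - a)) = j + g" by simp
  then show ?thesis by (metis offset_def mod_add_right_eq mod_add_self2)
qed

lemma cyc_add_offset: "a < g \<Longrightarrow> cyc (a + offset a j) = cyc j"
  using add_offset_mod cyc_eq_iff by simp

lemma offset_eq_0_iff:
  assumes "a < g" shows "offset a j = 0 \<longleftrightarrow> j mod g = a"
proof
  assume "offset a j = 0"
  then show "j mod g = a" using add_offset_mod[OF assms, of j] assms by simp
next
  assume "j mod g = a"
  then have "offset a j = (a + (g - a)) mod g" by (metis offset_def mod_add_left_eq)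
  then show "offset a j = 0" using assms by simp
qed

lemma offset_Suc: "offset a (Suc j) = (if Suc (offset a j) = g then 0 else Suc (offset a j))"
  by (simp add: offset_def mod_Suc)

lemma even_offset:
  assumes "even g" "a < g" shows "even (offset a j) \<longleftrightarrow> (even j \<longleftrightarrow> even a)"
proof -
  have "(j + (g - a)) mod g mod 2 = (j + (g - a)) mod 2"
    using \<open>even g\<close> by (intro mod_mod_cancel) simp
  then have "even (offset a j) \<longleftrightarrow> even (j + (g - a))"
    by (simp add: offset_def even_iff_mod_2_eq_zero)
  then show ?thesis using assms by presburger
qed

lemma kernel_major_zero:
  assumes "x \<in> mat_kernel Adj" "a \<in> majors" shows "x $ cyc a = 0"
proof -
  obtain p where "p \<in> pendants_at (cyc a)" using assms(2) majors_iff by blast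
  then show ?thesis using assms(1) by (auto simp: mat_kernel_Adj_iff pendants_at_iff)
qed

lemma pendant_sum_single:
  assumes "p \<in> pendants_at u" and "\<And>q. q \<in> pendants_at u \<Longrightarrow> q \<noteq> p \<Longrightarrow> x $ q = 0"
  shows "pendant_sum x u = \<sigma> u p * x $ p"
proof -
  have "pendant_sum x u = \<sigma> u p * x $ p + (\<Sum>q\<in>pendants_at u - {p}. \<sigma> u q * x $ q)"
    unfolding pendant_sum_def by (rule sum.remove[OF finite_pendants_at assms(1)])
  also have "(\<Sum>q\<in>pendants_at u - {p}. \<sigma> u q * x $ q) = 0"
    using assms(2) by (intro sum.neutral) auto
  finally show ?thesis by simp
qed

text \<open>A kernel vector vanishing on all pendants but one, attached at the major vertex b,
  satisfies the two-step recurrence along the whole cycle except at b itself.\<close>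
lemma kernel_cycle_vanishes:
  assumes x: "x \<in> mat_kernel Adj" and b: "b \<in> majors" and p\<^sub>0: "p\<^sub>0 \<in> pendants_at (cyc b)"
    and off: "\<And>q. q \<in> pendants \<Longrightarrow> q \<noteq> p\<^sub>0 \<Longrightarrow> x $ q = 0"
    and d\<^sub>1: "odd d\<^sub>1" "d\<^sub>1 \<le> g" "x $ cyc (b + d\<^sub>1) = 0"
  shows "x $ cyc j = 0"
proof -
  have bg: "b < g" using b majors_iff by simp
  have no_pendant_sum: "pendant_sum x (cyc (Suc (b + k))) = 0" if "k + 2 \<le> g" for k
  proof -
    have "cyc (Suc (b + k)) \<noteq> cyc b"
    proof
      assume "cyc (Suc (b + k)) = cyc b"
      then have "g dvd Suc k" using cyc_eq_iff mod_eq_dvd_iff_nat[of b "b + Suc k" g] by simp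
      then show False using that by (auto dest: dvd_imp_le)
    qed
    then have "q \<noteq> p\<^sub>0" if "q \<in> pendants_at (cyc (Suc (b + k)))" for q
      using that p\<^sub>0 by (auto simp: pendants_at_iff)
    then show ?thesis unfolding pendant_sum_def using off by (intro sum.neutral) (auto simp: pendants_at_iff)
  qed
  have "x $ cyc (b + d) = 0" if "d \<le> g" for d
  proof (rule two_step_recurrence_vanishes[where y = "\<lambda>k. x $ cyc (b + k)" and f = "\<lambda>k. cyc_sign (b + k)"])
    show "cyc_sign (b + k) * cyc_sign (b + k) = 1" for k by (rule cyc_sign_square)
    show "cyc_sign (b + k) * x $ cyc (b + k) + cyc_sign (b + Suc k) * x $ cyc (b + (k + 2)) = 0"
      if "k + 2 \<le> g" for k
    proof -
      have "cyc_sign (b + k) * x $ cyc (b + k) + cyc_sign (Suc (b + k)) * x $ cyc (b + k + 2)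
          + pendant_sum x (cyc (Suc (b + k))) = 0"
        using x unfolding mat_kernel_Adj_iff by blast
      then show ?thesis using no_pendant_sum[OF that] by (simp add: add.assoc)
    qed
  qed (use d\<^sub>1 that kernel_major_zero[OF x b] in auto)
  then show ?thesis using cyc_add_offset[OF bg, of j] offset_less[of b j] by (metis less_imp_le)
qed

lemma kernel_vanishes:
  assumes x: "x \<in> mat_kernel Adj" and b: "b \<in> majors" and p\<^sub>0: "p\<^sub>0 \<in> pendants_at (cyc b)"
    and off: "\<And>q. q \<in> pendants \<Longrightarrow> q \<noteq> p\<^sub>0 \<Longrightarrow> x $ q = 0"
    and escape: "x $ cyc (Suc b) = 0 \<or> odd g \<or> (\<exists>a\<in>majors. even a \<noteq> even b)"
  shows "x = 0\<^sub>v n"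
proof -
  have bg: "b < g" using b majors_iff by simp
  obtain d\<^sub>1 where d\<^sub>1: "odd d\<^sub>1" "d\<^sub>1 \<le> g" "x $ cyc (b + d\<^sub>1) = 0"
  proof -
    consider "x $ cyc (Suc b) = 0" | "odd g" | a where "even g" "a \<in> majors" "even a \<noteq> even b"
      using escape by blast
    then show ?thesis
    proof cases
      case 1
      then show ?thesis using that[of 1] length_ge_3 by simp
    next
      case 2
      then show ?thesis using that[of g] kernel_major_zero[OF x b] cyc_add_length[of b] by simp
    next
      case 3
      then have "odd (offset b a)" using even_offset[OF _ bg] by blast
      moreover have "x $ cyc (b + offset b a) = 0"
        using kernel_major_zero[OF x \<open>a \<in> majors\<close>] cyc_add_offset[OF bg] by simp
      ultimately show ?thesis using that offset_less less_imp_le by blast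
    qed
  qed
  have cycle_zero: "x $ cyc j = 0" for j by (rule kernel_cycle_vanishes[OF x b p\<^sub>0 off d\<^sub>1])
  have "cyc (Suc (b + g - 1)) = cyc b" using cyc_add_length[of b] length_pos by simp
  then have "pendant_sum x (cyc b) = 0"
    using x cycle_zero by (auto simp: mat_kernel_Adj_iff dest: spec[of _ "b + g - 1"])
  moreover have "pendant_sum x (cyc b) = \<sigma> (cyc b) p\<^sub>0 * x $ p\<^sub>0"
    using p\<^sub>0 off by (intro pendant_sum_single) (auto simp: pendants_at_iff)
  ultimately have "x $ p\<^sub>0 = 0" using p\<^sub>0 \<sigma>_nonzero by (auto simp: pendants_at_def)
  have "x $ v = 0" if "v < n" for v
    by (rule vertex_cases[OF that]) (metis off \<open>x $ p\<^sub>0 = 0\<close>, simp add: cycle_zero)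
  then show ?thesis using x by (intro eq_vecI) (auto simp: mat_kernel_Adj_iff)
qed

lemma kernel_dim_le:
  assumes b: "b \<in> majors" and p\<^sub>0: "p\<^sub>0 \<in> pendants_at (cyc b)"
  shows "kernel_dim Adj \<le> n - g"
proof -
  have p\<^sub>0': "p\<^sub>0 \<in> pendants" using p\<^sub>0 pendants_at_iff by simp
  have "kernel_dim Adj \<le> card (insert (cyc (Suc b)) (pendants - {p\<^sub>0}))"
    using kernel_vanishes[OF _ b p\<^sub>0] cyc_less pendants_less
    by (intro kernel_dim_le_card[OF Adj_carrier]) auto
  also have "\<dots> = n - g"
    using p\<^sub>0' finite_pendants card_pendants cyc_notin_pendants card_gt_0_iff by fastforce
  finally show ?thesis .
qed

lemma kernel_dim_less:
  assumes b: "b \<in> majors" and p\<^sub>0: "p\<^sub>0 \<in> pendants_at (cyc b)"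
    and escape: "odd g \<or> (\<exists>a\<in>majors. even a \<noteq> even b)"
  shows "kernel_dim Adj < n - g"
proof -
  have p\<^sub>0': "p\<^sub>0 \<in> pendants" using p\<^sub>0 pendants_at_iff by simp
  have "kernel_dim Adj \<le> card (pendants - {p\<^sub>0})"
    using kernel_vanishes[OF _ b p\<^sub>0] escape pendants_less
    by (intro kernel_dim_le_card[OF Adj_carrier]) auto
  also have "\<dots> < n - g"
    using p\<^sub>0' finite_pendants card_pendants card_gt_0_iff by fastforce
  finally show ?thesis .
qed

lemma pendant_rep_root:
  assumes "p \<in> pendants"
  shows "pendant_rep (root p) \<in> pendants" and "root (pendant_rep (root p)) = root p"
proof -
  have "p \<in> pendants_at (root p)" using assms by (simp add: pendants_at_iff)
  then have "pendant_rep (root p) \<in> pendants_at (root p)" using pendant_rep_in by blast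
  then show "pendant_rep (root p) \<in> pendants" "root (pendant_rep (root p)) = root p"
    by (simp_all add: pendants_at_iff)
qed

definition pendant_pair :: "nat \<Rightarrow> complex vec" where
  "pendant_pair p = vec n (\<lambda>v. if v = p then \<sigma> (root p) p
     else if v = pendant_rep (root p) then - \<sigma> (root p) v else 0)"

lemma pendant_pair_cyc: "p \<in> pendants \<Longrightarrow> pendant_pair p $ cyc j = 0"
  using cyc_less[of j] cyc_notin_pendants[of j] pendant_rep_root(1)
  by (auto simp: pendant_pair_def)

lemma pendant_pair_diag: "p \<in> pendants \<Longrightarrow> pendant_pair p $ p \<noteq> 0"
  using pendants_less edge_root edge_sym \<sigma>_nonzero by (simp add: pendant_pair_def)

lemma pendant_pair_off:
  assumes "p \<in> pendants" "q \<in> pendants" "q \<noteq> p" "q \<noteq> pendant_rep (root q)"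
  shows "pendant_pair p $ q = 0"
  using assms pendants_less pendant_rep_root(2)[of p] by (auto simp: pendant_pair_def)

lemma pendant_pair_in_kernel:
  assumes p: "p \<in> pendants" "p \<noteq> pendant_rep (root p)"
  shows "pendant_pair p \<in> mat_kernel Adj"
  unfolding mat_kernel_Adj_iff
proof (intro conjI ballI allI)
  show "pendant_pair p \<in> carrier_vec n" by (simp add: pendant_pair_def)
  show "pendant_pair p $ root q = 0" if "q \<in> pendants" for q
    using root_in_set[OF that] by (auto elim: in_set_csE simp: pendant_pair_cyc[OF p(1)])
  fix i
  let ?u = "root p" and ?r = "pendant_rep (root p)" and ?w = "cyc (Suc i)"
  have r: "?r \<in> pendants_at ?u" using pendant_rep_root[OF p(1)] by (simp add: pendants_at_iff)
  have "pendant_sum (pendant_pair p) ?w = 0"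
  proof (cases "?w = ?u")
    case True
    have "pendant_sum (pendant_pair p) ?w
        = (\<Sum>q\<in>pendants_at ?u. (if q = p then \<sigma> ?u p * \<sigma> ?u p else 0)
            - (if q = ?r then \<sigma> ?u ?r * \<sigma> ?u ?r else 0))"
      unfolding pendant_sum_def True
      using p(2) by (intro sum.cong refl) (auto simp: pendant_pair_def pendants_at_def pendants_less)
    also have "\<dots> = \<sigma> ?u p * \<sigma> ?u p - \<sigma> ?u ?r * \<sigma> ?u ?r"
      using p r by (simp add: sum_subtractf finite_pendants_at pendants_at_iff)
    also have "\<dots> = 0"
      using r edge_sym[OF edge_root[OF p(1)]] by (simp add: \<sigma>_square pendants_at_def)
    finally show ?thesis .
  next
    case False
    then show ?thesis unfolding pendant_sum_def
      using pendant_rep_root(2)[OF p(1)]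
      by (intro sum.neutral) (auto simp: pendant_pair_def pendants_at_iff pendants_less)
  qed
  then show "cyc_sign i * pendant_pair p $ cyc i + cyc_sign (Suc i) * pendant_pair p $ cyc (i + 2)
      + pendant_sum (pendant_pair p) ?w = 0"
    by (simp add: pendant_pair_cyc[OF p(1)])
qed

text \<open>major_walk a k is the entry at cycle position a + 2k + 1: starting from 1 at a + 1 it follows
  the two-step recurrence and is cut off at the next major vertex.\<close>
primrec major_walk :: "nat \<Rightarrow> nat \<Rightarrow> complex" where
  "major_walk a 0 = 1"
| "major_walk a (Suc k) = (if (a + 2 * k + 2) mod g \<in> majors then 0
     else - cyc_sign (a + 2 * k + 1) * cyc_sign (a + 2 * k + 2) * major_walk a k)"

definition major_coord :: "nat \<Rightarrow> nat \<Rightarrow> complex" where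
  "major_coord a j = (if odd (offset a j) then major_walk a (offset a j div 2) else 0)"

definition major_vec :: "nat \<Rightarrow> complex vec" where "major_vec a = extension (major_coord a)"

lemma major_coord_mod: "major_coord a (j mod g) = major_coord a j"
  by (simp add: major_coord_def offset_mod)

lemma major_vec_cyc: "major_vec a $ cyc j = major_coord a j"
  by (simp add: major_vec_def extension_cyc major_coord_mod)

lemma offset_Suc_self: "a < g \<Longrightarrow> offset a (Suc a) = 1"
  using offset_Suc[of a a] offset_eq_0_iff[of a a] length_ge_3 by simp

lemma major_vec_pivot: "a \<in> majors \<Longrightarrow> major_vec a $ cyc (Suc a) = 1"
  by (simp add: major_vec_cyc major_coord_def majors_iff offset_Suc_self)

lemma major_vec_other_pivot:
  assumes a: "a \<in> majors" and a': "a' \<in> majors" "a' \<noteq> a"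
    and "even g" and parity: "\<forall>e\<in>majors. even e = even a"
  shows "major_vec a $ cyc (Suc a') = 0"
proof -
  have ag: "a < g" and a'g: "a' < g" using a a' majors_iff by auto
  define e where "e = offset a a'"
  have "even e" using even_offset[OF \<open>even g\<close> ag] parity a' by (simp add: e_def)
  moreover have "e \<noteq> 0" using offset_eq_0_iff[OF ag] a'g a'(2) by (simp add: e_def)
  moreover have "e < g" using offset_less by (simp add: e_def)
  ultimately have "Suc e \<noteq> g" and e: "e = 2 * (e div 2 - 1) + 2"
    using \<open>even g\<close> by presburger+
  then have "offset a (Suc a') = 2 * (e div 2 - 1) + 3"
    using offset_Suc[of a a'] by (simp add: e_def)
  moreover have "a + 2 * (e div 2 - 1) + 2 = a + e" using e by linarith
  then have "(a + 2 * (e div 2 - 1) + 2) mod g = a'"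
    using add_offset_mod[OF ag, of a'] a'g by (simp only:) (simp add: e_def)
  ultimately show ?thesis using a' by (simp add: major_vec_cyc major_coord_def)
qed

lemma major_coord_recurrence:
  assumes a: "a \<in> majors" and "even g" and nonmajor: "Suc i mod g \<notin> majors"
  shows "cyc_sign i * major_coord a i + cyc_sign (Suc i) * major_coord a (i + 2) = 0"
proof -
  have ag: "a < g" using a majors_iff by simp
  define d where "d = offset a (Suc i)"
  have "d \<noteq> 0" using offset_eq_0_iff[OF ag] nonmajor a by (auto simp: d_def)
  then have offset_i: "offset a i = d - 1" using offset_Suc[of a i] by (auto simp: d_def split: if_splits)
  have offset_i2: "offset a (Suc (Suc i)) = (if Suc d = g then 0 else Suc d)"
    using offset_Suc[of a "Suc i"] by (simp add: d_def)
  show ?thesis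
  proof (cases "even d")
    case False
    then show ?thesis using \<open>d \<noteq> 0\<close> by (simp add: major_coord_def offset_i offset_i2)
  next
    case True
    define k where "k = d div 2 - 1"
    have d: "d = 2 * k + 2" and "Suc d \<noteq> g"
      using True \<open>d \<noteq> 0\<close> \<open>even g\<close> offset_less[of a "Suc i"] by (simp_all add: k_def d_def) presburger+
    have "(a + d) mod g = Suc i mod g" using add_offset_mod[OF ag] by (simp add: d_def)
    then have mod_eq: "(a + 2 * k + 2) mod g = Suc i mod g" "Suc (a + 2 * k + 1) mod g = Suc i mod g"
      by (simp_all add: d add.assoc)
    have "cyc_sign i = cyc_sign (a + 2 * k + 1)" "cyc_sign (Suc i) = cyc_sign (a + 2 * k + 2)"
      using mod_eq Suc_mod_length_eq_iff by (auto intro: cyc_sign_cong)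
    moreover have "major_coord a i = major_walk a k"
      "major_coord a (i + 2) = - cyc_sign (a + 2 * k + 1) * cyc_sign (a + 2 * k + 2) * major_walk a k"
      using \<open>Suc d \<noteq> g\<close> nonmajor mod_eq(1) by (simp_all add: major_coord_def offset_i offset_i2 d)
    ultimately show ?thesis using cyc_sign_square[of "a + 2 * k + 2"] by (simp add: algebra_simps)
  qed
qed

lemma major_vec_in_kernel:
  assumes a: "a \<in> majors" and "even g" and parity: "\<forall>e\<in>majors. even e = even a"
  shows "major_vec a \<in> mat_kernel Adj"
  unfolding major_vec_def
proof (rule extension_in_kernel)
  have ag: "a < g" using a majors_iff by simp
  show "major_coord a e = 0" if "e \<in> majors" for e
    using that parity even_offset[OF \<open>even g\<close> ag] by (simp add: major_coord_def)
  show "cyc_sign i * major_coord a (i mod g) + cyc_sign (Suc i) * major_coord a ((i + 2) mod g) = 0"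
    if "Suc i mod g \<notin> majors" for i
    using major_coord_recurrence[OF a \<open>even g\<close> that] by (simp add: major_coord_mod)
qed

lemma card_non_representatives:
  "card {p \<in> pendants. p \<noteq> pendant_rep (root p)} + card majors = card pendants"
proof -
  let ?R = "{p \<in> pendants. p = pendant_rep (root p)}"
  have "bij_betw (\<lambda>a. pendant_rep (cyc a)) majors ?R"
  proof (rule bij_betw_byWitness[where f' = "\<lambda>p. pos (root p)"])
    show "\<forall>a\<in>majors. pos (root (pendant_rep (cyc a))) = a"
      using pendant_rep_in by (auto simp: majors_iff pendants_at_iff pos_cyc)
    show "\<forall>p\<in>?R. pendant_rep (cyc (pos (root p))) = p"
      by (auto elim!: root_major simp: pos_cyc majors_iff)
    show "(\<lambda>a. pendant_rep (cyc a)) ` majors \<subseteq> ?R"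
      using pendant_rep_in by (auto simp: majors_iff pendants_at_iff)
    show "(\<lambda>p. pos (root p)) ` ?R \<subseteq> majors"
      by (auto elim!: root_major simp: pos_cyc majors_iff)
  qed
  then have "card ?R = card majors" by (simp add: bij_betw_same_card)
  moreover have "card {p \<in> pendants. p \<noteq> pendant_rep (root p)} + card ?R = card pendants"
    using finite_pendants by (subst card_Un_disjoint[symmetric]) (auto intro: arg_cong[where f = card])
  ultimately show ?thesis by simp
qed

lemma kernel_dim_ge:
  assumes "even g" and parity: "\<forall>a\<in>majors. \<forall>b\<in>majors. even a = even b"
  shows "n - g \<le> kernel_dim Adj"
proof -
  let ?N = "{p \<in> pendants. p \<noteq> pendant_rep (root p)}"
  let ?v = "case_sum pendant_pair major_vec" and ?pivot = "case_sum id (\<lambda>a. cyc (Suc a))"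
  have "card (?N <+> majors) \<le> kernel_dim Adj"
  proof (rule kernel_dim_ge_card[OF Adj_carrier, where v = ?v and p = ?pivot])
    show "finite (?N <+> majors)" using finite_pendants finite_majors by simp
    fix i assume i: "i \<in> ?N <+> majors"
    have "major_vec a \<in> mat_kernel Adj" if "a \<in> majors" for a
      using parity that by (intro major_vec_in_kernel[OF that \<open>even g\<close>]) blast
    then show "?v i \<in> mat_kernel Adj" "?pivot i < n" "?v i $ ?pivot i \<noteq> 0"
      using i pendants_less cyc_less pendant_pair_in_kernel pendant_pair_diag major_vec_pivot
      by (auto elim!: PlusE)
    fix j assume j: "j \<in> ?N <+> majors" and "i \<noteq> j"
    show "?v j $ ?pivot i = 0"
    proof (cases i; cases j)
      fix p q assume ij: "i = Inl p" "j = Inl q"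
      then have "p \<in> ?N" "q \<in> ?N" "q \<noteq> p" using i j \<open>i \<noteq> j\<close> by auto
      then show ?thesis unfolding ij by (simp add: pendant_pair_off)
    next
      fix p a assume ij: "i = Inl p" "j = Inr a"
      then have "p \<in> ?N" using i by auto
      then show ?thesis unfolding ij by (simp add: major_vec_def extension_pendant)
    next
      fix a q assume ij: "i = Inr a" "j = Inl q"
      then have "q \<in> pendants" using j by auto
      then show ?thesis unfolding ij by (simp add: pendant_pair_cyc)
    next
      fix a a' assume ij: "i = Inr a" "j = Inr a'"
      then have a: "a \<in> majors" "a' \<in> majors" "a \<noteq> a'" using i j \<open>i \<noteq> j\<close> by auto
      moreover have "\<forall>e\<in>majors. even e = even a'" using parity a by blast
      ultimately have "major_vec a' $ cyc (Suc a) = 0"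
        by (intro major_vec_other_pivot[OF a(2,1) _ \<open>even g\<close>]) blast+
      then show ?thesis by (simp only: ij sum.case)
    qed
  qed
  then show ?thesis
    using card_non_representatives card_pendants finite_pendants finite_majors by (simp add: card_Plus)
qed

theorem nullity_noncycle:
  assumes not_cycle: "set cs \<noteq> {0..<n}"
  shows "nullity n E sg = n - g \<longleftrightarrow>
    even g \<and> (\<forall>i < length (major_positions n E cs). odd (gap n E cs i))"
proof -
  have "set cs \<noteq> {..<n}" using not_cycle by (simp add: atLeast0LessThan)
  then obtain p\<^sub>0 where "p\<^sub>0 \<in> pendants" using set_cs_subset by (auto simp: pendants_def)
  then obtain b where b: "b \<in> majors" and p\<^sub>0: "p\<^sub>0 \<in> pendants_at (cyc b)"
    by (auto elim!: root_major simp: pendants_at_iff)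
  show ?thesis
  proof (cases "even g \<and> (\<forall>a\<in>majors. \<forall>b\<in>majors. even a = even b)")
    case True
    then have "kernel_dim Adj = n - g"
      using kernel_dim_ge kernel_dim_le[OF b p\<^sub>0] by (meson antisym)
    moreover have "even g \<and> (\<forall>i < length (major_positions n E cs). odd (gap n E cs i))"
      using True gap_odd_iff by blast
    ultimately show ?thesis by (simp add: nullity_eq_kernel_dim)
  next
    case False
    then have "odd g \<or> (\<exists>a\<in>majors. even a \<noteq> even b)" using b by blast
    then have "kernel_dim Adj \<noteq> n - g" using kernel_dim_less[OF b p\<^sub>0] by simp
    moreover have "\<not> (even g \<and> (\<forall>i < length (major_positions n E cs). odd (gap n E cs i)))"
      using False gap_odd_iff by blast
    ultimately show ?thesis by (simp add: nullity_eq_kernel_dim)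
  qed
qed

end

theorem theorem5p2:
  fixes n :: nat and E :: "nat \<Rightarrow> nat \<Rightarrow> bool" and sg :: "nat \<Rightarrow> nat \<Rightarrow> real"
    and cs :: "nat list" and g :: nat
  assumes "signed_graph n E sg"
    and "canonical_with n E cs"
    and "g = length cs"
  shows "(set cs = {0..<n} \<longrightarrow>
           (nullity n E sg = n - g \<longleftrightarrow>
              odd g \<or> (balanced_cycle sg cs \<and> g mod 4 = 2)
                    \<or> (\<not> balanced_cycle sg cs \<and> g mod 4 = 0)))
       \<and> (set cs \<noteq> {0..<n} \<longrightarrow>
           (nullity n E sg = n - g \<longleftrightarrow>
              even g \<and> (\<forall>i < length (major_positions n E cs). odd (gap n E cs i))))"
proof -
  interpret canonical_unicyclic n E sg cs using assms(1,2) by unfold_locales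
  show ?thesis unfolding assms(3) using nullity_cycle nullity_noncycle by blast
qed

end
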